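(* Let $X$ be an integrable random variable (i.e. $\mathbb{E}[|X|]<\infty$), let $N\sim\mathcal{N}(0,1)$ be independent of $X$, and set $Y=X+N$. Then there is no polynomial $q$ with real coefficients and $\deg q\ge 2$ such that $\mathbb{E}[X\mid Y]=q(Y)$ almost surely. Moreover, if $X$ has finite variance, then $\mathbb{E}[X\mid Y]$ is almost surely equal to a polynomial in $Y$ if and only if $X$ is Gaussian or almost surely constant.
   Context: $\mathbb{E}[X\mid Y]$ denotes the conditional expectation of $X$ given $\sigma(Y)$. *)

theory Defs
  imports "HOL-Probability.Probability" "HOL-Computational_Algebra.Polynomial"
begin

end

theory Submission
  imports Defs
begin

(* Let p(y) = E phi(y - X) be the density of Y = X + N and h(y) = E[X phi(y - X)].
   Then E[X | Y] = h(Y) / p(Y), and differentiating under the integral gives p' = h - y p.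
   So if E[X | Y] = q(Y), the log-density ln p has the polynomial derivative q(y) - y.
   But ln p <= 0, and since half of the mass of X lies in a bounded interval,
   ln p(y) >= K - (|y| + R)^2 / 2; a function with polynomial derivative squeezed between
   these bounds has derivative of degree at most one. Hence ln p is a quadratic polynomial
   bounded above, and as p integrates to 1, Y is Gaussian. Its characteristic function is
   that of X times exp(-t^2/2), so X is Gaussian or constant. Conversely, for such X the
   density p is Gaussian, and p' = h - y p makes h / p affine. *)

section \<open>Integration\<close>

lemma continuous_AE_eq_lborel_imp_eq:
  fixes f g :: "real \<Rightarrow> real"
  assumes "\<And>x. isCont f x" "\<And>x. isCont g x" and "AE x in lborel. f x = g x"
  shows "f y = g y"
proof (rule ccontr)
  assume "f y \<noteq> g y"
  moreover have "isCont (\<lambda>x. f x - g x) y" using assms(1,2) by (intro continuous_intros)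
  ultimately obtain e where e: "e > 0" "\<And>x. dist y x < e \<Longrightarrow> f x \<noteq> g x"
    using continuous_at_avoid[of y "\<lambda>x. f x - g x" 0] by auto
  from assms(3) obtain Z where Z: "{x. f x \<noteq> g x} \<subseteq> Z" "Z \<in> null_sets lborel"
    by (auto elim!: AE_E) (metis null_setsI sets_lborel)
  have "{y - e <..< y + e} \<subseteq> Z"
    using e(2) Z(1) by (force simp: dist_real_def)
  then have "emeasure lborel {y - e <..< y + e} \<le> emeasure lborel Z"
    using Z by (intro emeasure_mono) auto
  with Z e(1) show False by (simp add: null_setsD1)
qed

lemma integral_dominated_convergence_at:
  fixes s :: "'b::first_countable_topology \<Rightarrow> 'a \<Rightarrow> 'c::{banach, second_countable_topology}"
  assumes "f \<in> borel_measurable M" "\<And>u. s u \<in> borel_measurable M" "integrable M w"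
    and lim: "\<And>x. x \<in> space M \<Longrightarrow> ((\<lambda>u. s u x) \<longlongrightarrow> f x) (at t)"
    and bound: "\<And>u x. x \<in> space M \<Longrightarrow> norm (s u x) \<le> w x"
  shows "((\<lambda>u. \<integral>x. s u x \<partial>M) \<longlongrightarrow> (\<integral>x. f x \<partial>M)) (at t)"
  unfolding tendsto_at_iff_sequentially comp_def
proof (intro allI impI)
  fix r :: "nat \<Rightarrow> 'b" assume "\<forall>i. r i \<in> UNIV - {t}" "r \<longlonglongrightarrow> t"
  with lim have "AE x in M. (\<lambda>i. s (r i) x) \<longlonglongrightarrow> f x"
    by (intro AE_I2) (auto simp: tendsto_at_iff_sequentially comp_def)
  then show "(\<lambda>i. \<integral>x. s (r i) x \<partial>M) \<longlonglongrightarrow> (\<integral>x. f x \<partial>M)"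
    using assms by (intro integral_dominated_convergence[where w = w]) auto
qed

section \<open>Normal densities\<close>

lemma has_real_derivative_normal_density:
  assumes "\<sigma> > 0"
  shows "(normal_density \<mu> \<sigma> has_real_derivative - (y - \<mu>) / \<sigma>\<^sup>2 * normal_density \<mu> \<sigma> y) (at y)"
proof -
  have "((\<lambda>y. - (y - \<mu>)\<^sup>2 / (2 * \<sigma>\<^sup>2)) has_real_derivative - (y - \<mu>) / \<sigma>\<^sup>2) (at y)"
    using assms by (auto intro!: derivative_eq_intros simp: field_simps power2_eq_square)
  from DERIV_cmult[OF DERIV_fun_exp[OF this], of "1 / sqrt (2 * pi * \<sigma>\<^sup>2)"]
  show ?thesis unfolding normal_density_def[abs_def] by (simp add: mult_ac)
qed

lemma has_real_derivative_std_normal_density: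
  "(std_normal_density has_real_derivative - y * std_normal_density y) (at y)"
  using has_real_derivative_normal_density[of 1 0 y] by simp

lemma std_normal_density_le_1: "std_normal_density z \<le> 1"
proof -
  have "1 / sqrt (2 * pi) \<le> 1" using pi_gt3 by (simp add: divide_le_eq)
  then show ?thesis
    unfolding std_normal_density_def by (intro mult_le_one) auto
qed

lemma std_normal_density_antimono:
  "\<bar>a\<bar> \<le> \<bar>b\<bar> \<Longrightarrow> std_normal_density b \<le> std_normal_density a"
  by (auto simp: std_normal_density_def abs_le_square_iff intro!: divide_right_mono)

lemma abs_mult_std_normal_density_le_1: "\<bar>z * std_normal_density z\<bar> \<le> 1"
proof -
  have "\<bar>z\<bar> \<le> 1 + z\<^sup>2 / 2"
    using sum_squares_ge_zero[of "\<bar>z\<bar> - 1" 0] by (simp add: power2_eq_square algebra_simps abs_mult_self_eq)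
  also have "\<dots> \<le> exp (z\<^sup>2 / 2)" by (rule exp_ge_add_one_self_aux) simp
  finally have "\<bar>z\<bar> * exp (- z\<^sup>2 / 2) \<le> 1" by (simp add: exp_minus field_simps)
  moreover have "1 / sqrt (2 * pi) \<le> 1" using pi_gt3 by (simp add: divide_le_eq)
  ultimately have "1 / sqrt (2 * pi) * (\<bar>z\<bar> * exp (- z\<^sup>2 / 2)) \<le> 1"
    by (meson mult_le_one abs_ge_zero exp_ge_zero mult_nonneg_nonneg)
  then show ?thesis by (simp add: std_normal_density_def abs_mult)
qed

lemma std_normal_density_lipschitz:
  "\<bar>std_normal_density a - std_normal_density b\<bar> \<le> \<bar>a - b\<bar>"
proof -
  have *: "\<bar>std_normal_density v - std_normal_density u\<bar> \<le> v - u" if "u < v" for u v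
  proof -
    obtain z where "std_normal_density v - std_normal_density u = (v - u) * (- z * std_normal_density z)"
      using MVT2[OF \<open>u < v\<close>, of std_normal_density "\<lambda>z. - z * std_normal_density z"]
        has_real_derivative_std_normal_density by blast
    then show ?thesis
      using abs_mult_std_normal_density_le_1[of z] \<open>u < v\<close> by (simp add: abs_mult mult_le_cancel_left1)
  qed
  show ?thesis
    using *[of a b] *[of b a] by (cases a b rule: linorder_cases) (auto simp: abs_minus_commute)
qed

lemma exp_quadratic_density_eq_normal_density:
  fixes f :: "real \<Rightarrow> real"
  assumes f: "\<And>y. f y = C * exp (a * y + b * y\<^sup>2)" and "C > 0" "b < 0"
    and mass: "(\<integral>\<^sup>+y. f y \<partial>lborel) = 1"
  shows "f = normal_density (- a / (2 * b)) (sqrt (- 1 / (2 * b)))"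
proof -
  define m where "m = - a / (2 * b)"
  define s where "s = sqrt (- 1 / (2 * b))"
  have "s > 0" using \<open>b < 0\<close> by (simp add: s_def)
  have s2: "s\<^sup>2 = - 1 / (2 * b)" using \<open>b < 0\<close> by (simp add: s_def)
  define K where "K = C * exp (- a\<^sup>2 / (4 * b)) * sqrt (2 * pi * s\<^sup>2)"
  have "K > 0" using \<open>C > 0\<close> \<open>s > 0\<close> by (simp add: K_def)
  \<comment> \<open>completing the square\<close>
  have "a * y + b * y\<^sup>2 = - a\<^sup>2 / (4 * b) + - (y - m)\<^sup>2 / (2 * s\<^sup>2)" for y
    unfolding s2 m_def using \<open>b < 0\<close> by (simp add: field_simps power2_eq_square)
  then have "exp (a * y + b * y\<^sup>2) = exp (- a\<^sup>2 / (4 * b)) * exp (- (y - m)\<^sup>2 / (2 * s\<^sup>2))" for y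
    by (simp only: exp_add)
  then have fK: "f y = K * normal_density m s y" for y
    using \<open>s > 0\<close> by (simp add: f K_def normal_density_def)
  have "1 = (\<integral>\<^sup>+y. ennreal K * ennreal (normal_density m s y) \<partial>lborel)"
    using mass \<open>K > 0\<close> by (simp add: fK ennreal_mult)
  also have "\<dots> = ennreal K"
    using \<open>s > 0\<close> by (simp add: nn_integral_cmult nn_integral_eq_integral)
  finally have "K = 1" using \<open>K > 0\<close> by simp
  then show ?thesis using fK by (auto simp: m_def s_def)
qed

section \<open>Functions with polynomial derivative\<close>

lemma poly_tendsto_at_top:
  fixes p :: "real poly"
  assumes "degree p \<ge> 1" "lead_coeff p > 0"
  shows "filterlim (poly p) at_top at_top"
proof -
  have "((\<lambda>x. poly p x / x ^ degree p) \<longlongrightarrow> lead_coeff p) at_top"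
    using poly_divide_tendsto_aux[of p] by (rule filterlim_mono) (auto simp: at_top_le_at_infinity)
  moreover have "filterlim (\<lambda>x::real. x ^ degree p) at_top at_top"
    using assms by (intro filterlim_pow_at_top filterlim_ident) auto
  ultimately have "filterlim (\<lambda>x. poly p x / x ^ degree p * x ^ degree p) at_top at_top"
    using assms(2) filterlim_tendsto_pos_mult_at_top by blast
  moreover have "\<forall>\<^sub>F x in at_top. poly p x / x ^ degree p * x ^ degree p = poly p x"
    using eventually_gt_at_top[of "0::real"] by eventually_elim simp
  ultimately show ?thesis by (rule iffD1[OF filterlim_cong[OF refl refl], rotated])
qed

lemma DERIV_poly_unbounded_above:
  fixes L :: "real \<Rightarrow> real" and g :: "real poly"
  assumes deriv: "\<And>y. (L has_real_derivative poly g y) (at y)"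
    and "degree g \<ge> 1" "lead_coeff g > 0"
  shows "\<exists>y\<ge>y0. L y > B"
proof -
  have "\<forall>\<^sub>F y in at_top. poly g y \<ge> 1"
    using poly_tendsto_at_top[OF assms(2,3)] by (simp add: filterlim_at_top)
  then obtain y1 where y1: "\<And>y. y \<ge> y1 \<Longrightarrow> poly g y \<ge> 1"
    by (auto simp: eventually_at_top_linorder)
  define a where "a = max y0 y1"
  define b where "b = a + \<bar>B - L a\<bar> + 1"
  have "a < b" by (simp add: b_def)
  then obtain z where z: "a < z" "L b - L a = (b - a) * poly g z"
    using MVT2[of a b L "poly g"] deriv by blast
  have "b - a \<le> (b - a) * poly g z"
    using y1[of z] z(1) \<open>a < b\<close> mult_left_mono[of 1 "poly g z" "b - a"] by (simp add: a_def)
  with z(2) have "L b > B" by (simp add: b_def)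
  moreover have "b \<ge> y0" by (simp add: a_def b_def)
  ultimately show ?thesis by blast
qed

lemma DERIV_poly_degree_le_1:
  fixes L :: "real \<Rightarrow> real" and g :: "real poly"
  assumes deriv: "\<And>y. (L has_real_derivative poly g y) (at y)"
    and upper: "\<And>y. L y \<le> C" and lower: "\<And>y. K - (\<bar>y\<bar> + R)\<^sup>2 / 2 \<le> L y"
  shows "degree g \<le> 1"
proof (rule ccontr)
  assume "\<not> degree g \<le> 1"
  then have deg: "degree g \<ge> 2" by simp
  then have "lead_coeff g \<noteq> 0" by auto
  then consider "lead_coeff g > 0" | "lead_coeff g < 0" by linarith
  then show False
  proof cases
    case 1
    with deg show False
      using DERIV_poly_unbounded_above[OF deriv, of 0 C] upper by (auto simp: not_less[symmetric])
  next
    case 2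
    \<comment> \<open>then even \<open>L y + (y + R)\<^sup>2\<close> tends to \<open>-\<infinity>\<close>, against the lower bound\<close>
    define h where "h = - (g + [:2 * R, 2:])"
    have lower_deg: "degree [:2 * R, 2:] < degree g" using deg by simp
    have "degree h = degree g"
      unfolding h_def degree_minus using degree_add_eq_left[OF lower_deg] .
    moreover have "lead_coeff (g + [:2 * R, 2:]) = lead_coeff g"
      using degree_add_eq_left[OF lower_deg] coeff_eq_0[OF lower_deg] by simp
    then have "lead_coeff h = - lead_coeff g" unfolding h_def lead_coeff_minus by simp
    moreover have "((\<lambda>y. - (L y + (y + R)\<^sup>2)) has_real_derivative poly h y) (at y)" for y
      unfolding h_def using deriv[of y]
      by (auto intro!: derivative_eq_intros simp: algebra_simps power2_eq_square)
    ultimately obtain y where "y \<ge> 0" "- (L y + (y + R)\<^sup>2) > - K"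
      using DERIV_poly_unbounded_above[of "\<lambda>y. - (L y + (y + R)\<^sup>2)" h 0 "- K"] deg 2 by auto
    with lower[of y] zero_le_power2[of "y + R"] show False by simp
  qed
qed

lemma quadratic_bounded_above:
  fixes a c B :: real
  assumes bounded: "\<And>y. a * y + c * y\<^sup>2 \<le> B"
  shows "c < 0 \<or> c = 0 \<and> a = 0"
proof (rule ccontr)
  assume "\<not> ?thesis"
  then have c: "c \<ge> 0" and "\<bar>a\<bar> + c > 0" by auto
  define t where "t = max 1 ((\<bar>B\<bar> + 1) / (\<bar>a\<bar> + c))"
  define y where "y = (if a < 0 then - t else t)"
  have "t \<ge> 1" by (simp add: t_def)
  have "(\<bar>B\<bar> + 1) / (\<bar>a\<bar> + c) \<le> t" by (simp add: t_def)
  then have "\<bar>B\<bar> + 1 \<le> (\<bar>a\<bar> + c) * t"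
    using \<open>\<bar>a\<bar> + c > 0\<close> by (simp add: pos_divide_le_eq mult.commute)
  also have "\<dots> \<le> \<bar>a\<bar> * t + c * t\<^sup>2"
    using \<open>t \<ge> 1\<close> c by (simp add: algebra_simps power2_eq_square mult_left_mono)
  also have "\<dots> = a * y + c * y\<^sup>2" by (simp add: y_def)
  finally show False using bounded[of y] by linarith
qed

section \<open>Gaussian characteristic functions\<close>

lemma real_distribution_return: "real_distribution (return borel m)"
  unfolding real_distribution_def real_distribution_axioms_def
  by (auto intro: prob_space_return)

lemma real_distribution_normal_density:
  "\<sigma> > 0 \<Longrightarrow> real_distribution (density lborel (normal_density \<mu> \<sigma>))"
  unfolding real_distribution_def real_distribution_axioms_def
  by (auto intro: prob_space_normal_density)

lemma char_return: "char (return borel m) t = iexp (t * m)"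
  unfolding char_def by (subst integral_return) auto

lemma char_normal_density:
  assumes "\<sigma> > 0"
  shows "char (density lborel (normal_density \<mu> \<sigma>)) t
    = iexp (t * \<mu>) * complex_of_real (exp (- (\<sigma> * t)\<^sup>2 / 2))"
proof -
  interpret std: prob_space std_normal_distribution by (rule prob_space_normal_density) simp
  have "distributed std_normal_distribution lborel (\<lambda>x. x) std_normal_density"
    unfolding distributed_def
    by (auto simp: distr_cong[of _ std_normal_distribution lborel std_normal_distribution])
  from std.normal_density_affine[OF this, of \<sigma> \<mu>] assms
  have law: "density lborel (normal_density \<mu> \<sigma>) = distr std_normal_distribution lborel (\<lambda>x. \<mu> + \<sigma> * x)"
    by (simp add: distributed_def)
  have "char (density lborel (normal_density \<mu> \<sigma>)) t
      = (CLINT x|std_normal_distribution. iexp (t * \<mu>) * iexp ((t * \<sigma>) * x))"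
    unfolding law char_def
    by (subst integral_distr) (auto simp: exp_add[symmetric] algebra_simps intro!: Bochner_Integration.integral_cong)
  also have "\<dots> = iexp (t * \<mu>) * char std_normal_distribution (t * \<sigma>)"
    unfolding char_def by simp
  finally show ?thesis
    by (simp add: char_std_normal_distribution mult.commute)
qed

lemma real_distribution_char_gaussian:
  assumes "real_distribution \<mu>"
    and char: "\<And>t. char \<mu> t = iexp (t * m) * complex_of_real (exp (- v * t\<^sup>2 / 2))"
  shows "v = 0 \<and> \<mu> = return borel m \<or> v > 0 \<and> \<mu> = density lborel (normal_density m (sqrt v))"
proof -
  have "exp (- v / 2) \<le> 1"
    using real_distribution.cmod_char_le_1[OF assms(1), of 1] char[of 1] by (simp add: norm_mult)
  then consider "v = 0" | "v > 0" by fastforce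
  then show ?thesis
  proof cases
    case 1
    then have "char \<mu> = char (return borel m)" by (auto simp: char char_return)
    then show ?thesis
      using 1 Levy_uniqueness[OF assms(1) real_distribution_return] by blast
  next
    case 2
    then have "char \<mu> = char (density lborel (normal_density m (sqrt v)))"
      by (auto simp: char char_normal_density power_mult_distrib)
    then show ?thesis
      using 2 Levy_uniqueness[OF assms(1) real_distribution_normal_density] by simp
  qed
qed

lemma (in prob_space) gaussian_deconvolution:
  assumes [measurable]: "X \<in> borel_measurable M" and indep: "indep_var borel X borel N"
    and N: "distributed M lborel N std_normal_density"
    and sum: "distributed M lborel (\<lambda>\<omega>. X \<omega> + N \<omega>) (normal_density m s)" and "s > 0"
  shows "(\<exists>\<sigma>>0. distributed M lborel X (normal_density m \<sigma>)) \<or> (AE \<omega> in M. X \<omega> = m)"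
proof -
  have [measurable]: "N \<in> borel_measurable M" using N by (simp add: distributed_def)
  have law: "distr M borel Z = distr M lborel Z" for Z by (rule distr_cong) auto
  have "char (distr M borel X) t * complex_of_real (exp (- t\<^sup>2 / 2))
      = iexp (t * m) * complex_of_real (exp (- (s\<^sup>2 - 1) * t\<^sup>2 / 2)) * complex_of_real (exp (- t\<^sup>2 / 2))" for t
  proof -
    have "char (distr M borel X) t * char (distr M borel N) t = char (distr M borel (\<lambda>\<omega>. X \<omega> + N \<omega>)) t"
      by (rule char_distr_add[OF indep, symmetric])
    with N sum \<open>s > 0\<close> show ?thesis
      by (simp add: law distributed_def char_normal_density char_std_normal_distribution
          power_mult_distrib algebra_simps flip: exp_add of_real_mult)
  qed
  then have "char (distr M borel X) t = iexp (t * m) * complex_of_real (exp (- (s\<^sup>2 - 1) * t\<^sup>2 / 2))" for t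
    by simp
  from real_distribution_char_gaussian[OF real_distribution_distr this]
  consider "distr M borel X = return borel m"
    | "s\<^sup>2 - 1 > 0" "distr M borel X = density lborel (normal_density m (sqrt (s\<^sup>2 - 1)))"
    by auto
  then show ?thesis
  proof cases
    case 1
    have "AE x in distr M borel X. x = m" unfolding 1 by (subst AE_return) auto
    then show ?thesis by (subst (asm) AE_distr_iff) auto
  next
    case 2
    then have "distributed M lborel X (normal_density m (sqrt (s\<^sup>2 - 1)))"
      by (simp add: law distributed_def)
    with 2 show ?thesis by auto
  qed
qed

section \<open>The additive Gaussian noise channel\<close>

locale gaussian_channel = prob_space M for M :: "'a measure" +
  fixes X N Y :: "'a \<Rightarrow> real"
  assumes X_measurable[measurable]: "X \<in> borel_measurable M" and integrable_X: "integrable M X"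
    and N_std_normal: "distributed M lborel N std_normal_density"
    and indep_X_N: "indep_var borel X borel N"
    and Y_def: "Y = (\<lambda>\<omega>. X \<omega> + N \<omega>)"
begin

lemma N_measurable[measurable]: "N \<in> borel_measurable M"
  using N_std_normal by (simp add: distributed_def)

lemma Y_measurable[measurable]: "Y \<in> borel_measurable M"
  unfolding Y_def by measurable

definition law_X :: "real measure" where
  "law_X = distr M borel X"

lemma sets_law_X[measurable_cong]: "sets law_X = sets borel"
  by (simp add: law_X_def)

lemma space_law_X[simp]: "space law_X = UNIV"
  by (simp add: law_X_def)

sublocale law_X: prob_space law_X
  unfolding law_X_def by (rule prob_space_distr) simp

lemma integrable_law_X_abs: "integrable law_X abs"
  unfolding law_X_def using integrable_X by (subst integrable_distr_eq) auto

lemma distr_X_Y: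
  "distr M (borel \<Otimes>\<^sub>M borel) (\<lambda>\<omega>. (X \<omega>, Y \<omega>))
    = density (law_X \<Otimes>\<^sub>M lborel) (\<lambda>(x, y). std_normal_density (y - x))"
proof (rule measure_eqI)
  interpret std: prob_space "density lborel std_normal_density"
    by (rule prob_space_normal_density) simp
  interpret pair_sigma_finite law_X lborel ..
  have law_N: "distr M borel N = density lborel std_normal_density"
    using N_std_normal distr_cong[of M M lborel borel N N] by (simp add: distributed_def)
  have law_X_N: "distr M (borel \<Otimes>\<^sub>M borel) (\<lambda>\<omega>. (X \<omega>, N \<omega>)) = law_X \<Otimes>\<^sub>M density lborel std_normal_density"
    using indep_X_N unfolding indep_var_distribution_eq law_X_def law_N by simp
  fix A assume "A \<in> sets (distr M (borel \<Otimes>\<^sub>M borel) (\<lambda>\<omega>. (X \<omega>, Y \<omega>)))"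
  then have [measurable]: "A \<in> sets (borel \<Otimes>\<^sub>M borel)" by simp
  have "emeasure (distr M (borel \<Otimes>\<^sub>M borel) (\<lambda>\<omega>. (X \<omega>, Y \<omega>))) A
      = (\<integral>\<^sup>+z. indicator A (fst z, fst z + snd z) \<partial>distr M (borel \<Otimes>\<^sub>M borel) (\<lambda>\<omega>. (X \<omega>, N \<omega>)))"
    by (simp add: Y_def emeasure_distr nn_integral_distr flip: nn_integral_indicator)
  also have "\<dots> = (\<integral>\<^sup>+x. \<integral>\<^sup>+n. ennreal (std_normal_density n) * indicator A (x, x + n) \<partial>lborel \<partial>law_X)"
    unfolding law_X_N by (subst std.nn_integral_fst[symmetric]) (auto simp: nn_integral_density)
  also have "\<dots> = (\<integral>\<^sup>+x. \<integral>\<^sup>+y. ennreal (std_normal_density (y - x)) * indicator A (x, y) \<partial>lborel \<partial>law_X)"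
    using nn_integral_real_affine[where c = 1 and t = x and
        f = "\<lambda>y. ennreal (std_normal_density (y - x)) * indicator A (x, y)" for x]
    by (auto intro: nn_integral_cong)
  also have "\<dots> = (\<integral>\<^sup>+z. ennreal (std_normal_density (snd z - fst z)) * indicator A z \<partial>(law_X \<Otimes>\<^sub>M lborel))"
    by (subst lborel.nn_integral_fst[symmetric]) auto
  also have "\<dots> = emeasure (density (law_X \<Otimes>\<^sub>M lborel) (\<lambda>(x, y). std_normal_density (y - x))) A"
    by (subst emeasure_density) (auto simp: split_beta')
  finally show "emeasure (distr M (borel \<Otimes>\<^sub>M borel) (\<lambda>\<omega>. (X \<omega>, Y \<omega>))) A = \<dots>" .
qed (metis sets_distr sets_density sets_lborel sets_law_X sets_pair_measure_cong)

lemma integral_X_Y: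
  fixes g :: "real \<times> real \<Rightarrow> real"
  assumes [measurable]: "g \<in> borel_measurable (borel \<Otimes>\<^sub>M borel)"
    and "integrable M (\<lambda>\<omega>. g (X \<omega>, Y \<omega>))"
  shows "integrable lborel (\<lambda>y. \<integral>x. std_normal_density (y - x) * g (x, y) \<partial>law_X)"
    and "(\<integral>\<omega>. g (X \<omega>, Y \<omega>) \<partial>M) = (\<integral>y. \<integral>x. std_normal_density (y - x) * g (x, y) \<partial>law_X \<partial>lborel)"
proof -
  interpret pair_sigma_finite law_X lborel ..
  have "integrable (distr M (borel \<Otimes>\<^sub>M borel) (\<lambda>\<omega>. (X \<omega>, Y \<omega>))) g"
    using assms(2) by (subst integrable_distr_eq) auto
  then have int: "integrable (law_X \<Otimes>\<^sub>M lborel) (\<lambda>(x, y). std_normal_density (y - x) * g (x, y))"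
    unfolding distr_X_Y by (subst (asm) integrable_density) (auto simp: split_beta')
  then show "integrable lborel (\<lambda>y. \<integral>x. std_normal_density (y - x) * g (x, y) \<partial>law_X)"
    by (rule integrable_snd)
  have "(\<integral>\<omega>. g (X \<omega>, Y \<omega>) \<partial>M) = (\<integral>z. g z \<partial>distr M (borel \<Otimes>\<^sub>M borel) (\<lambda>\<omega>. (X \<omega>, Y \<omega>)))"
    by (subst integral_distr) auto
  also have "\<dots> = (\<integral>z. std_normal_density (snd z - fst z) * g z \<partial>(law_X \<Otimes>\<^sub>M lborel))"
    unfolding distr_X_Y by (subst integral_density) (auto simp: split_beta')
  also have "\<dots> = (\<integral>y. \<integral>x. std_normal_density (y - x) * g (x, y) \<partial>law_X \<partial>lborel)"
    using integral_snd[OF int] by (simp add: split_beta')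
  finally show "(\<integral>\<omega>. g (X \<omega>, Y \<omega>) \<partial>M) = \<dots>" .
qed

lemma integrable_std_normal_density_law_X:
  "integrable law_X (\<lambda>x. std_normal_density (y - x))"
  by (rule law_X.integrable_const_bound[where B = 1]) (auto simp: std_normal_density_le_1)

definition Y_density :: "real \<Rightarrow> real" where
  "Y_density y = (\<integral>x. std_normal_density (y - x) \<partial>law_X)"

lemma Y_density_measurable[measurable]: "Y_density \<in> borel_measurable borel"
  unfolding Y_density_def by (rule law_X.borel_measurable_lebesgue_integral) measurable

lemma Y_density_nonneg: "Y_density y \<ge> 0"
  unfolding Y_density_def by (auto intro!: integral_nonneg_AE)

lemma Y_density_le_1: "Y_density y \<le> 1"
proof -
  have "Y_density y \<le> (\<integral>x. 1 \<partial>law_X)"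
    unfolding Y_density_def using integrable_std_normal_density_law_X
    by (rule Bochner_Integration.integral_mono) (auto simp: std_normal_density_le_1)
  then show ?thesis using law_X.prob_space by simp
qed

lemma distr_Y: "distr M lborel Y = density lborel Y_density"
proof (rule measure_eqI)
  interpret pair_sigma_finite law_X lborel ..
  fix A assume "A \<in> sets (distr M lborel Y)"
  then have [measurable]: "A \<in> sets borel" by simp
  have "emeasure (distr M lborel Y) A = emeasure (distr M (borel \<Otimes>\<^sub>M borel) (\<lambda>\<omega>. (X \<omega>, Y \<omega>))) (UNIV \<times> A)"
    by (simp add: emeasure_distr vimage_def Int_def)
  also have "\<dots> = (\<integral>\<^sup>+z. ennreal (std_normal_density (snd z - fst z)) * indicator (UNIV \<times> A) z \<partial>(law_X \<Otimes>\<^sub>M lborel))"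
    unfolding distr_X_Y by (subst emeasure_density) (auto simp: split_beta')
  also have "\<dots> = (\<integral>\<^sup>+y. \<integral>\<^sup>+x. ennreal (std_normal_density (y - x)) * indicator A y \<partial>law_X \<partial>lborel)"
    by (subst nn_integral_snd[symmetric]) (auto simp: indicator_times)
  also have "\<dots> = (\<integral>\<^sup>+y. ennreal (Y_density y) * indicator A y \<partial>lborel)"
    using integrable_std_normal_density_law_X
    by (auto simp: nn_integral_multc Y_density_def nn_integral_eq_integral intro!: nn_integral_cong)
  also have "\<dots> = emeasure (density lborel Y_density) A"
    by (simp add: emeasure_density)
  finally show "emeasure (distr M lborel Y) A = emeasure (density lborel Y_density) A" .
qed simp

definition X_moment_density :: "real \<Rightarrow> real" where
  "X_moment_density y = (\<integral>x. x * std_normal_density (y - x) \<partial>law_X)"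

lemma integrable_X_std_normal_density_law_X:
  "integrable law_X (\<lambda>x. x * std_normal_density (y - x))"
  using integrable_law_X_abs
  by (rule Bochner_Integration.integrable_bound)
    (auto simp: abs_mult std_normal_density_le_1 intro!: mult_left_le)

lemma X_moment_density_measurable[measurable]: "X_moment_density \<in> borel_measurable borel"
  unfolding X_moment_density_def by (rule law_X.borel_measurable_lebesgue_integral) measurable

lemma integral_indicator_Y_X:
  assumes [measurable]: "B \<in> sets borel"
  shows "(\<integral>\<omega>. indicator B (Y \<omega>) * X \<omega> \<partial>M) = (\<integral>y. indicator B y * X_moment_density y \<partial>lborel)"
proof -
  have "integrable M (\<lambda>\<omega>. indicator B (Y \<omega>) * X \<omega>)"
    using integrable_X by (rule Bochner_Integration.integrable_bound) (auto simp: indicator_def)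
  moreover have "(\<integral>x. std_normal_density (y - x) * (indicator B y * x) \<partial>law_X) = indicator B y * X_moment_density y" for y
    unfolding X_moment_density_def by (simp add: ac_simps flip: integral_mult_right_zero)
  ultimately show ?thesis
    using integral_X_Y(2)[of "\<lambda>z. indicator B (snd z) * fst z"] by simp
qed

lemma integrable_X_moment_density: "integrable lborel X_moment_density"
  using integral_X_Y(1)[of fst] integrable_X by (simp add: X_moment_density_def[abs_def] mult_ac)

lemma Y_density_lower_bound: "\<exists>R. \<forall>y. std_normal_density (\<bar>y\<bar> + R) / 2 \<le> Y_density y"
proof -
  define R where "R = 2 * (\<integral>x. \<bar>x\<bar> \<partial>law_X) + 1"
  have "R > 0" by (simp add: R_def add_nonneg_pos)
  \<comment> \<open>Markov's inequality puts half of the mass of \<open>X\<close> into \<open>{-R<..<R}\<close>\<close>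
  have "law_X.prob {x. \<bar>x\<bar> \<ge> R} \<le> (\<integral>x. \<bar>x\<bar> \<partial>law_X) / R"
    using integral_Markov_inequality_measure[OF integrable_law_X_abs _ _ \<open>R > 0\<close>, of UNIV] by simp
  also have "\<dots> \<le> 1 / 2" using \<open>R > 0\<close> by (simp add: R_def field_simps)
  finally have "law_X.prob {x. \<bar>x\<bar> \<ge> R} \<le> 1 / 2" .
  moreover have "UNIV - {x. \<bar>x\<bar> \<ge> R} = {x. \<bar>x\<bar> < R}" by auto
  ultimately have half: "law_X.prob {x. \<bar>x\<bar> < R} \<ge> 1 / 2"
    using law_X.prob_compl[of "{x. \<bar>x\<bar> \<ge> R}"] by simp
  have "std_normal_density (\<bar>y\<bar> + R) / 2 \<le> Y_density y" for y
  proof -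
    have "std_normal_density (\<bar>y\<bar> + R) / 2 \<le> std_normal_density (\<bar>y\<bar> + R) * law_X.prob {x. \<bar>x\<bar> < R}"
      using mult_left_mono[OF half normal_density_nonneg[of 0 1 "\<bar>y\<bar> + R"]] by simp
    also have "\<dots> = (\<integral>x. indicator {x. \<bar>x\<bar> < R} x * std_normal_density (\<bar>y\<bar> + R) \<partial>law_X)"
      by simp
    also have "\<dots> \<le> Y_density y"
      unfolding Y_density_def using integrable_std_normal_density_law_X
      by (intro Bochner_Integration.integral_mono law_X.integrable_const_bound[where B = 1])
        (auto simp: indicator_def std_normal_density_le_1 intro!: std_normal_density_antimono)
    finally show ?thesis .
  qed
  then show ?thesis by blast
qed

lemma Y_density_pos: "Y_density y > 0"
proof -
  obtain R where "std_normal_density (\<bar>y\<bar> + R) / 2 \<le> Y_density y"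
    using Y_density_lower_bound by blast
  then show ?thesis using normal_density_pos[of 1 0 "\<bar>y\<bar> + R"] by simp
qed

lemma Y_density_nonzero[simp]: "Y_density y \<noteq> 0"
  using Y_density_pos[of y] by simp

lemma integrable_moment_ratio_Y:
  "integrable M (\<lambda>\<omega>. X_moment_density (Y \<omega>) / Y_density (Y \<omega>))"
proof -
  have "integrable (density lborel Y_density) (\<lambda>y. X_moment_density y / Y_density y)"
    by (subst integrable_density) (auto simp: Y_density_nonneg integrable_X_moment_density)
  then show ?thesis
    by (simp add: distr_Y[symmetric] integrable_distr_eq)
qed

lemma integral_indicator_Y_moment_ratio:
  assumes [measurable]: "B \<in> sets borel"
  shows "(\<integral>\<omega>. indicator B (Y \<omega>) * X \<omega> \<partial>M)
    = (\<integral>\<omega>. indicator B (Y \<omega>) * (X_moment_density (Y \<omega>) / Y_density (Y \<omega>)) \<partial>M)"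
proof -
  have "(\<integral>\<omega>. indicator B (Y \<omega>) * X \<omega> \<partial>M)
      = (\<integral>y. Y_density y *\<^sub>R (indicator B y * (X_moment_density y / Y_density y)) \<partial>lborel)"
    by (simp add: integral_indicator_Y_X)
  also have "\<dots> = (\<integral>y. indicator B y * (X_moment_density y / Y_density y) \<partial>density lborel Y_density)"
    by (rule integral_density[symmetric]) (auto simp: Y_density_nonneg)
  also have "\<dots> = (\<integral>\<omega>. indicator B (Y \<omega>) * (X_moment_density (Y \<omega>) / Y_density (Y \<omega>)) \<partial>M)"
    unfolding distr_Y[symmetric] by (rule integral_distr) auto
  finally show ?thesis .
qed

abbreviation cond_exp_X_Y :: "'a \<Rightarrow> real" where
  "cond_exp_X_Y \<equiv> real_cond_exp M (vimage_algebra (space M) Y borel) X"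

lemma cond_exp_X_Y_eq: "AE \<omega> in M. cond_exp_X_Y \<omega> = X_moment_density (Y \<omega>) / Y_density (Y \<omega>)"
proof -
  let ?F = "vimage_algebra (space M) Y borel"
  have sets_F: "sets ?F = {Y -` B \<inter> space M | B. B \<in> sets borel}"
    by (rule sets_vimage_algebra2) simp
  interpret F: finite_measure_subalgebra M ?F
    by unfold_locales (auto simp: subalgebra_def sets_F)
  have "(\<lambda>\<omega>. X_moment_density (Y \<omega>) / Y_density (Y \<omega>)) \<in> borel_measurable ?F"
    using measurable_comp[OF measurable_vimage_algebra1[of Y], of _ borel "\<lambda>y. X_moment_density y / Y_density y"]
    by (simp add: comp_def)
  moreover have "(\<integral>\<omega>\<in>A. X \<omega> \<partial>M) = (\<integral>\<omega>\<in>A. X_moment_density (Y \<omega>) / Y_density (Y \<omega>) \<partial>M)"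
    if "A \<in> sets ?F" for A
  proof -
    obtain B where [measurable]: "B \<in> sets borel" and A: "A = Y -` B \<inter> space M"
      using \<open>A \<in> sets ?F\<close> by (auto simp: sets_F)
    have "(\<integral>\<omega>\<in>A. f \<omega> \<partial>M) = (\<integral>\<omega>. indicator B (Y \<omega>) * f \<omega> \<partial>M)" for f :: "'a \<Rightarrow> real"
      unfolding set_lebesgue_integral_def A
      by (intro Bochner_Integration.integral_cong) (auto simp: indicator_def)
    then show ?thesis using integral_indicator_Y_moment_ratio[of B] by simp
  qed
  ultimately show ?thesis
    by (intro F.real_cond_exp_charact integrable_X integrable_moment_ratio_Y) auto
qed

lemma has_real_derivative_Y_density:
  "(Y_density has_real_derivative X_moment_density y - y * Y_density y) (at y)"
proof -
  have lim: "((\<lambda>u. \<integral>x. (std_normal_density (u - x) - std_normal_density (y - x)) / (u - y) \<partial>law_X)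
      \<longlongrightarrow> (\<integral>x. (x - y) * std_normal_density (y - x) \<partial>law_X)) (at y)"
  proof (rule integral_dominated_convergence_at[where w = "\<lambda>_. 1"])
    fix x
    have "((\<lambda>u. std_normal_density (u - x)) has_real_derivative - (y - x) * std_normal_density (y - x) * (1 - 0)) (at y)"
      by (rule DERIV_chain2[OF has_real_derivative_std_normal_density]) (intro derivative_intros)
    then show "((\<lambda>u. (std_normal_density (u - x) - std_normal_density (y - x)) / (u - y))
        \<longlongrightarrow> (x - y) * std_normal_density (y - x)) (at y)"
      by (simp add: has_field_derivative_iff)
    show "norm ((std_normal_density (u - x) - std_normal_density (y - x)) / (u - y)) \<le> 1" for u
      using std_normal_density_lipschitz[of "u - x" "y - x"] by (simp add: abs_divide divide_le_eq_1)
  qed auto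
  have limit: "(\<integral>x. (x - y) * std_normal_density (y - x) \<partial>law_X) = X_moment_density y - y * Y_density y"
    unfolding X_moment_density_def Y_density_def
    using integrable_std_normal_density_law_X integrable_X_std_normal_density_law_X
    by (simp add: left_diff_distrib)
  have quotient: "(Y_density u - Y_density y) / (u - y)
      = (\<integral>x. (std_normal_density (u - x) - std_normal_density (y - x)) / (u - y) \<partial>law_X)" for u
    unfolding Y_density_def
    by (simp add: Bochner_Integration.integral_diff[OF integrable_std_normal_density_law_X integrable_std_normal_density_law_X])
  show ?thesis
    using lim unfolding has_field_derivative_iff quotient limit .
qed

lemma isCont_Y_density: "isCont Y_density y"
  using has_real_derivative_Y_density by (rule DERIV_isCont)

lemma isCont_X_moment_density: "isCont X_moment_density y"
  unfolding isCont_def X_moment_density_def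
proof (rule integral_dominated_convergence_at[where w = abs])
  fix x
  have "isCont std_normal_density (y - x)"
    using has_real_derivative_std_normal_density by (rule DERIV_isCont)
  then show "((\<lambda>u. x * std_normal_density (u - x)) \<longlongrightarrow> x * std_normal_density (y - x)) (at y)"
    by (intro tendsto_intros isCont_tendsto_compose[of _ std_normal_density]) auto
  show "norm (x * std_normal_density (u - x)) \<le> \<bar>x\<bar>" for u
    by (auto simp: abs_mult std_normal_density_le_1 intro!: mult_left_le)
qed (auto simp: integrable_law_X_abs)

lemma nn_integral_Y_density: "(\<integral>\<^sup>+y. Y_density y \<partial>lborel) = 1"
proof -
  have "emeasure (distr M lborel Y) UNIV = 1"
    by (subst emeasure_distr) (auto simp: emeasure_space_1)
  then show ?thesis by (simp add: distr_Y emeasure_density)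
qed

lemma moment_density_eq_if_cond_exp_poly:
  assumes "AE \<omega> in M. cond_exp_X_Y \<omega> = poly q (Y \<omega>)"
  shows "X_moment_density y = poly q y * Y_density y"
proof -
  have [measurable]: "poly q \<in> borel_measurable borel"
    by (intro borel_measurable_continuous_onI continuous_at_imp_continuous_on) simp
  have "AE \<omega> in M. poly q (Y \<omega>) = X_moment_density (Y \<omega>) / Y_density (Y \<omega>)"
    using assms cond_exp_X_Y_eq by eventually_elim simp
  then have "AE y in density lborel Y_density. poly q y = X_moment_density y / Y_density y"
    unfolding distr_Y[symmetric] by (subst AE_distr_iff) auto
  then have "AE y in lborel. poly q y = X_moment_density y / Y_density y"
    by (subst (asm) AE_density) (auto simp: Y_density_pos)
  then have "poly q y = X_moment_density y / Y_density y"
    by (rule continuous_AE_eq_lborel_imp_eq[rotated 2])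
      (auto intro!: isCont_divide isCont_X_moment_density isCont_Y_density)
  then show ?thesis by (simp add: field_simps)
qed

lemma cond_exp_poly_if_moment_density_eq:
  assumes "\<And>y. X_moment_density y = poly q y * Y_density y"
  shows "AE \<omega> in M. cond_exp_X_Y \<omega> = poly q (Y \<omega>)"
  using cond_exp_X_Y_eq by eventually_elim (simp add: assms)

lemma has_real_derivative_ln_Y_density:
  assumes "\<And>y. X_moment_density y = poly q y * Y_density y"
  shows "((\<lambda>y. ln (Y_density y)) has_real_derivative poly (q - [:0, 1:]) y) (at y)"
proof -
  have "1 / Y_density y * (X_moment_density y - y * Y_density y) = poly (q - [:0, 1:]) y"
    using assms[of y] by (simp add: field_simps)
  then show ?thesis
    using DERIV_chain2[OF DERIV_ln_divide[OF Y_density_pos] has_real_derivative_Y_density, of y]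
    by (simp only:)
qed

lemma ln_Y_density_lower_bound: "\<exists>K R. \<forall>y. K - (\<bar>y\<bar> + R)\<^sup>2 / 2 \<le> ln (Y_density y)"
proof -
  obtain R where R: "\<And>y. std_normal_density (\<bar>y\<bar> + R) / 2 \<le> Y_density y"
    using Y_density_lower_bound by blast
  have "ln (1 / (2 * sqrt (2 * pi))) - (\<bar>y\<bar> + R)\<^sup>2 / 2 = ln (std_normal_density (\<bar>y\<bar> + R) / 2)" for y
    by (simp add: std_normal_density_def ln_mult ln_div)
  also have "\<dots> y \<le> ln (Y_density y)" for y
    using R[of y] normal_density_pos[of 1 0 "\<bar>y\<bar> + R"] by simp
  finally show ?thesis by blast
qed

lemma degree_le_1_if_cond_exp_poly:
  assumes "AE \<omega> in M. cond_exp_X_Y \<omega> = poly q (Y \<omega>)"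
  shows "degree q \<le> 1"
proof -
  obtain K R where "\<And>y. K - (\<bar>y\<bar> + R)\<^sup>2 / 2 \<le> ln (Y_density y)"
    using ln_Y_density_lower_bound by blast
  moreover have "ln (Y_density y) \<le> 0" for y
    using Y_density_pos[of y] Y_density_le_1[of y] by simp
  ultimately have "degree (q - [:0, 1:]) \<le> 1"
    using DERIV_poly_degree_le_1[OF has_real_derivative_ln_Y_density] moment_density_eq_if_cond_exp_poly[OF assms]
    by blast
  then have "degree (q - [:0, 1:] + [:0, 1:]) \<le> 1"
    by (intro degree_add_le) auto
  then show ?thesis by simp
qed

lemma Y_density_exp_quadratic:
  assumes "AE \<omega> in M. cond_exp_X_Y \<omega> = poly q (Y \<omega>)"
  obtains a b where "b < 0" "\<And>y. Y_density y = Y_density 0 * exp (a * y + b * y\<^sup>2)"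
proof -
  define p where "p = q - [:0, 1:]"
  define a b where "a = coeff p 0" and "b = coeff p 1 / 2"
  have "degree p \<le> 1"
    unfolding p_def using degree_le_1_if_cond_exp_poly[OF assms] by (intro degree_diff_le) auto
  then have "q - [:0, 1:] = [:a, 2 * b:]"
    unfolding p_def[symmetric] by (intro poly_eqI) (auto simp: a_def b_def coeff_pCons coeff_eq_0 split: nat.split)
  then have "((\<lambda>y. ln (Y_density y)) has_real_derivative a + 2 * b * y) (at y)" for y
    using has_real_derivative_ln_Y_density[OF moment_density_eq_if_cond_exp_poly[OF assms], of y]
    by (simp add: algebra_simps)
  moreover have "((\<lambda>y. a * y + b * y\<^sup>2) has_real_derivative a + 2 * b * y) (at y)" for y
    by (auto intro!: derivative_eq_intros)
  ultimately have "((\<lambda>y. ln (Y_density y) - (a * y + b * y\<^sup>2)) has_real_derivative 0) (at y)" for y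
    using DERIV_diff by fastforce
  then have ln_form: "ln (Y_density y) = ln (Y_density 0) + (a * y + b * y\<^sup>2)" for y
    using DERIV_isconst_all[of "\<lambda>y. ln (Y_density y) - (a * y + b * y\<^sup>2)" y 0] by simp
  have exp_form: "Y_density y = Y_density 0 * exp (a * y + b * y\<^sup>2)" for y
    using arg_cong[OF ln_form[of y], of exp] by (simp add: exp_add Y_density_pos)
  have "a * y + b * y\<^sup>2 \<le> - ln (Y_density 0)" for y
    using ln_form[of y] ln_le_zero_iff[OF Y_density_pos, of y] Y_density_le_1[of y] by linarith
  then consider "b < 0" | "b = 0" "a = 0" using quadratic_bounded_above by blast
  then show ?thesis
  proof cases
    case 1
    then show ?thesis using exp_form that by blast
  next
    case 2
    then have "(\<lambda>y. ennreal (Y_density y)) = (\<lambda>_. ennreal (Y_density 0))"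
      by (intro ext) (subst exp_form, simp)
    then have "(\<integral>\<^sup>+y. Y_density y \<partial>lborel) = \<infinity>"
      using Y_density_pos[of 0] by (simp add: ennreal_mult_top)
    with nn_integral_Y_density show ?thesis by simp
  qed
qed

lemma Y_gaussian_if_cond_exp_poly:
  assumes "AE \<omega> in M. cond_exp_X_Y \<omega> = poly q (Y \<omega>)"
  shows "\<exists>m s. s > 0 \<and> distributed M lborel Y (normal_density m s)"
proof -
  obtain a b where "b < 0" and "\<And>y. Y_density y = Y_density 0 * exp (a * y + b * y\<^sup>2)"
    using Y_density_exp_quadratic[OF assms] by blast
  from exp_quadratic_density_eq_normal_density[OF this(2) Y_density_pos this(1) nn_integral_Y_density]
  have "Y_density = normal_density (- a / (2 * b)) (sqrt (- 1 / (2 * b)))" .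
  then have "distributed M lborel Y (normal_density (- a / (2 * b)) (sqrt (- 1 / (2 * b))))"
    using distr_Y by (simp add: distributed_def)
  moreover have "sqrt (- 1 / (2 * b)) > 0" using \<open>b < 0\<close> by simp
  ultimately show ?thesis by blast
qed

lemma cond_exp_poly_if_X_gaussian:
  assumes "\<sigma> > 0" and "distributed M lborel X (normal_density \<mu> \<sigma>)"
  shows "\<exists>q. AE \<omega> in M. cond_exp_X_Y \<omega> = poly q (Y \<omega>)"
proof -
  define s where "s = sqrt (\<sigma>\<^sup>2 + 1)"
  have "s > 0" by (simp add: s_def add_nonneg_pos)
  have "distributed M lborel Y (normal_density \<mu> s)"
    using add_indep_normal[OF indep_X_N assms(1) zero_less_one assms(2) N_std_normal]
    by (simp add: s_def Y_def)
  then have "density lborel Y_density = density lborel (normal_density \<mu> s)"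
    by (simp add: distr_Y[symmetric] distributed_def)
  then have "AE y in lborel. Y_density y = normal_density \<mu> s y"
    by (subst (asm) sigma_finite_measure.density_unique_iff[OF lborel.sigma_finite_measure_axioms])
      (auto simp: Y_density_nonneg)
  then have Y_normal: "Y_density = normal_density \<mu> s"
    using DERIV_isCont[OF has_real_derivative_normal_density[OF \<open>s > 0\<close>]]
    by (intro ext continuous_AE_eq_lborel_imp_eq[OF isCont_Y_density]) auto
  \<comment> \<open>comparing the two expressions for the derivative of the density of \<open>Y\<close>\<close>
  have "X_moment_density y = poly [:\<mu> / s\<^sup>2, 1 - 1 / s\<^sup>2:] y * Y_density y" for y
    using DERIV_unique[OF has_real_derivative_Y_density[of y],
        unfolded Y_normal, OF has_real_derivative_normal_density[OF \<open>s > 0\<close>]] \<open>s > 0\<close>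
    by (simp add: Y_normal field_simps)
  then show ?thesis using cond_exp_poly_if_moment_density_eq by blast
qed

lemma cond_exp_poly_if_X_constant:
  assumes "AE \<omega> in M. X \<omega> = c"
  shows "\<exists>q. AE \<omega> in M. cond_exp_X_Y \<omega> = poly q (Y \<omega>)"
proof -
  have "law_X = distr M borel (\<lambda>_. c)"
    unfolding law_X_def by (rule distr_cong_AE[OF refl refl assms]) auto
  then have law: "law_X = return borel c" by simp
  have "X_moment_density y = poly [:c:] y * Y_density y" for y
    unfolding X_moment_density_def Y_density_def law by (subst (1 2) integral_return) auto
  then show ?thesis using cond_exp_poly_if_moment_density_eq by blast
qed

end

theorem theorem2p2:
  fixes M :: "'a measure" and X N Y :: "'a \<Rightarrow> real"
  assumes "prob_space M"
    and "X \<in> borel_measurable M" and "integrable M X"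
    and "distributed M lborel N std_normal_density"
    and "prob_space.indep_var M borel X borel N"
    and "Y = (\<lambda>\<omega>. X \<omega> + N \<omega>)"
  shows "\<not> (\<exists>q :: real poly. degree q \<ge> 2 \<and>
            (AE \<omega> in M. real_cond_exp M (vimage_algebra (space M) Y borel) X \<omega> = poly q (Y \<omega>)))
   \<and> (integrable M (\<lambda>\<omega>. (X \<omega>)\<^sup>2) \<longrightarrow>
         ((\<exists>q :: real poly. AE \<omega> in M.
              real_cond_exp M (vimage_algebra (space M) Y borel) X \<omega> = poly q (Y \<omega>))
          \<longleftrightarrow> ((\<exists>\<mu> \<sigma>. \<sigma> > 0 \<and> distributed M lborel X (normal_density \<mu> \<sigma>))
               \<or> (\<exists>c. AE \<omega> in M. X \<omega> = c))))"
proof -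
  interpret gaussian_channel M X N Y
    using assms by (simp add: gaussian_channel_def gaussian_channel_axioms_def)
  have "\<not> (\<exists>q. degree q \<ge> 2 \<and> (AE \<omega> in M. cond_exp_X_Y \<omega> = poly q (Y \<omega>)))"
    using degree_le_1_if_cond_exp_poly by fastforce
  \<comment> \<open>the characterization holds for every integrable \<open>X\<close>\<close>
  moreover have "(\<exists>q. AE \<omega> in M. cond_exp_X_Y \<omega> = poly q (Y \<omega>))
      \<longleftrightarrow> (\<exists>\<mu> \<sigma>. \<sigma> > 0 \<and> distributed M lborel X (normal_density \<mu> \<sigma>))
        \<or> (\<exists>c. AE \<omega> in M. X \<omega> = c)" (is "?poly \<longleftrightarrow> ?gaussian \<or> ?constant")
  proof
    assume ?poly
    then obtain m s where "s > 0" "distributed M lborel Y (normal_density m s)"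
      using Y_gaussian_if_cond_exp_poly by blast
    then show "?gaussian \<or> ?constant"
      using gaussian_deconvolution[OF X_measurable indep_X_N N_std_normal, of m s] by (auto simp: Y_def)
  qed (use cond_exp_poly_if_X_gaussian cond_exp_poly_if_X_constant in blast)
  ultimately show ?thesis by blast
qed

end
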